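(* Let $D,W,N_0,\zeta,P_A>0$ be fixed. For a product of channel gains $x=g h>0$ let $\gamma=\frac{\zeta P_A x}{WN_0}$, $\alpha=\mathbb{L}_0\!\left(\frac{\gamma-1}{e}\right)+1$ with $\mathbb{L}_0$ the principal Lambert W function, and $$\hat\tau_S(x)=\frac{D\ln2}{W\alpha},\qquad \hat\tau_0(x)=\frac{D\ln2}{W\alpha\gamma}\left(2^{\alpha/\ln2}-1\right),$$ i.e. the optimal information transmission and energy harvesting times of a single source with uplink gain $g$ and downlink gain $h$ transmitting $D$ bits directly to the AP when the maximum power constraint is inactive. Then $\hat\tau_S$ and $\hat\tau_0$ are decreasing functions of $x=gh$.
   Context: Single source wireless powered network: the source harvests energy $\zeta P_A h\tau_0$ from the AP during time $\tau_0$, then transmits $D$ bits during time $\tau_S$ to the AP over an AWGN channel with gain $g$, bandwidth $W$, noise spectral density $N_0$; the maximum transmit power is assumed large enough not to constrain the problem. *)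

theory Defs
  imports Complex_Main
begin

text \<open>Principal branch of the Lambert W function, defined for y \<ge> -1/e as the
unique w \<ge> -1 with w * exp w = y.\<close>
definition lambertW0 :: "real \<Rightarrow> real" where
  "lambertW0 y = (THE w. w \<ge> -1 \<and> w * exp w = y)"

definition snr_gamma :: "real \<Rightarrow> real \<Rightarrow> real \<Rightarrow> real \<Rightarrow> real \<Rightarrow> real" where
  "snr_gamma W N0 \<zeta> PA x = \<zeta> * PA * x / (W * N0)"

definition alpha_opt :: "real \<Rightarrow> real \<Rightarrow> real \<Rightarrow> real \<Rightarrow> real \<Rightarrow> real" where
  "alpha_opt W N0 \<zeta> PA x = lambertW0 ((snr_gamma W N0 \<zeta> PA x - 1) / exp 1) + 1"

definition tauS_opt :: "real \<Rightarrow> real \<Rightarrow> real \<Rightarrow> real \<Rightarrow> real \<Rightarrow> real \<Rightarrow> real" where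
  "tauS_opt D W N0 \<zeta> PA x = D * ln 2 / (W * alpha_opt W N0 \<zeta> PA x)"

definition tau0_opt :: "real \<Rightarrow> real \<Rightarrow> real \<Rightarrow> real \<Rightarrow> real \<Rightarrow> real \<Rightarrow> real" where
  "tau0_opt D W N0 \<zeta> PA x =
     D * ln 2 / (W * alpha_opt W N0 \<zeta> PA x * snr_gamma W N0 \<zeta> PA x)
       * (2 powr (alpha_opt W N0 \<zeta> PA x / ln 2) - 1)"

end

theory Submission
  imports Defs
begin

text \<open>The defining property of the Lambert W function turns
\<open>\<alpha> = W\<^sub>0((\<gamma> - 1)/e) + 1\<close> into \<open>(\<alpha> - 1) e\<^sup>\<alpha> = \<gamma> - 1\<close>. The left-hand side is
strictly increasing for \<open>\<alpha> \<ge> 0\<close>, so \<open>\<alpha>\<close> is a positive, strictly increasing function of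
\<open>\<gamma>\<close>, hence of \<open>x = gh\<close>; this settles \<open>\<tau>\<^sub>S = D ln 2/(W \<alpha>)\<close>. Since \<open>2\<^bsup>\<alpha>/ln 2\<^esup> = e\<^sup>\<alpha>\<close>,
eliminating \<open>\<gamma>\<close> gives \<open>\<tau>\<^sub>0 = D ln 2/(W r(\<alpha>))\<close> with
\<open>r(a) = a ((a - 1) e\<^sup>a + 1)/(e\<^sup>a - 1) = a (a e\<^sup>a/(e\<^sup>a - 1) - 1)\<close>,
a product of two positive increasing functions of \<open>a > 0\<close>.\<close>

lemma strict_mono_on_mult_exp: "strict_mono_on {-1..} (\<lambda>w::real. w * exp w)"
proof (rule strict_mono_onI)
  fix a b :: real
  assume "a \<in> {-1..}" "a < b"
  show "a * exp a < b * exp b"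
  proof (rule DERIV_pos_imp_increasing_open[OF \<open>a < b\<close>])
    fix x assume "a < x"
    then have "0 < (1 + x) * exp x"
      using \<open>a \<in> {-1..}\<close> by simp
    then have "exp x + x * exp x > 0"
      by (simp add: distrib_right)
    moreover have "DERIV (\<lambda>x. x * exp x) x :> exp x + x * exp x"
      by (auto intro!: derivative_eq_intros)
    ultimately show "\<exists>y. DERIV (\<lambda>x. x * exp x) x :> y \<and> y > 0"
      by blast
  qed (intro continuous_intros)
qed

lemma lambertW0_correct:
  fixes y :: real
  assumes "-1 / exp 1 \<le> y"
  shows "-1 \<le> lambertW0 y \<and> lambertW0 y * exp (lambertW0 y) = y"
proof -
  have "\<exists>w. -1 \<le> w \<and> w \<le> max 0 y \<and> w * exp w = y"
  proof (rule IVT')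
    show "-1 * exp (-1) \<le> y"
      using assms by (simp add: exp_minus field_simps)
    show "y \<le> max 0 y * exp (max 0 y)"
      using mult_left_mono[of 1 "exp y" y] by (cases "y \<ge> 0") auto
  qed (auto intro!: continuous_intros)
  then obtain w where w: "-1 \<le> w \<and> w * exp w = y"
    by blast
  have "inj_on (\<lambda>w::real. w * exp w) {-1..}"
    using strict_mono_on_mult_exp by (rule strict_mono_on_imp_inj_on)
  then have "lambertW0 y = w"
    unfolding lambertW0_def using w by (intro the_equality) (auto dest: inj_onD)
  with w show ?thesis
    by simp
qed

lemma strict_mono_on_shifted_mult_exp: "strict_mono_on {0..} (\<lambda>a::real. (a - 1) * exp a)"
proof (rule strict_mono_onI)
  fix a b :: real
  assume "a \<in> {0..}" "a < b"
  then have "(a - 1) * exp (a - 1) < (b - 1) * exp (b - 1)"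
    by (intro strict_mono_onD[OF strict_mono_on_mult_exp]) auto
  moreover have shift: "(c - 1) * exp c = exp 1 * ((c - 1) * exp (c - 1))" for c :: real
    by (simp add: mult.left_commute flip: exp_add)
  ultimately show "(a - 1) * exp a < (b - 1) * exp b"
    by (simp only: shift) simp
qed

lemma lambertW0_shifted_equation:
  fixes \<gamma> :: real
  assumes "0 < \<gamma>"
  defines "\<alpha> \<equiv> lambertW0 ((\<gamma> - 1) / exp 1) + 1"
  shows "0 < \<alpha>" and "(\<alpha> - 1) * exp \<alpha> = \<gamma> - 1"
proof -
  define w where "w = lambertW0 ((\<gamma> - 1) / exp 1)"
  have "-1 / exp 1 \<le> (\<gamma> - 1) / exp 1"
    using assms by (intro divide_right_mono) auto
  then have w: "-1 \<le> w" "w * exp w = (\<gamma> - 1) / exp 1"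
    using lambertW0_correct unfolding w_def by auto
  then show eq: "(\<alpha> - 1) * exp \<alpha> = \<gamma> - 1"
    unfolding \<alpha>_def w_def[symmetric] by (simp add: exp_add field_simps)
  have "\<alpha> \<noteq> 0"
    using eq \<open>0 < \<gamma>\<close> by auto
  with w(1) show "0 < \<alpha>"
    unfolding \<alpha>_def w_def[symmetric] by simp
qed

lemma strict_mono_on_lambertW0_shifted:
  "strict_mono_on {0<..} (\<lambda>\<gamma>::real. lambertW0 ((\<gamma> - 1) / exp 1) + 1)"
proof (rule strict_mono_onI)
  fix \<gamma> \<gamma>' :: real
  assume "\<gamma> \<in> {0<..}" "\<gamma> < \<gamma>'"
  then have "0 < \<gamma>" "0 < \<gamma>'"
    by auto
  define \<alpha> \<alpha>' where "\<alpha> = lambertW0 ((\<gamma> - 1) / exp 1) + 1" and "\<alpha>' = lambertW0 ((\<gamma>' - 1) / exp 1) + 1"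
  note eq = lambertW0_shifted_equation[OF \<open>0 < \<gamma>\<close>, folded \<alpha>_def]
    and eq' = lambertW0_shifted_equation[OF \<open>0 < \<gamma>'\<close>, folded \<alpha>'_def]
  have "(\<alpha> - 1) * exp \<alpha> < (\<alpha>' - 1) * exp \<alpha>'"
    using eq(2) eq'(2) \<open>\<gamma> < \<gamma>'\<close> by simp
  with eq(1) eq'(1) show "\<alpha> < \<alpha>'"
    using strict_mono_on_less[OF strict_mono_on_shifted_mult_exp, of \<alpha> \<alpha>'] by simp
qed

lemma strict_mono_on_mult_exp_div: "strict_mono_on {0<..} (\<lambda>a::real. a * exp a / (exp a - 1))"
proof (rule strict_mono_onI)
  fix a b :: real
  assume "a \<in> {0<..}" "a < b"
  show "a * exp a / (exp a - 1) < b * exp b / (exp b - 1)"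
  proof (rule DERIV_pos_imp_increasing[OF \<open>a < b\<close>])
    fix x assume "a \<le> x"
    then have "0 < x"
      using \<open>a \<in> {0<..}\<close> by simp
    then have "0 < exp x - 1" "0 < exp x - 1 - x"
      using exp_minus_greater[of "-x"] by auto
    then have "DERIV (\<lambda>x. x * exp x / (exp x - 1)) x :> exp x * (exp x - 1 - x) / (exp x - 1)\<^sup>2"
      by (auto intro!: derivative_eq_intros simp: power2_eq_square algebra_simps)
    moreover have "0 < exp x * (exp x - 1 - x) / (exp x - 1)\<^sup>2"
      using \<open>0 < exp x - 1 - x\<close> \<open>0 < exp x - 1\<close> by simp
    ultimately show "\<exists>y. DERIV (\<lambda>x. x * exp x / (exp x - 1)) x :> y \<and> y > 0"
      by fastforce
  qed
qed

definition tau0_rate :: "real \<Rightarrow> real" where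
  "tau0_rate a = a * ((a - 1) * exp a + 1) / (exp a - 1)"

lemma tau0_rate_pos_strict_mono:
  fixes a b :: real
  assumes "0 < a" "a < b"
  shows "0 < tau0_rate a" and "tau0_rate a < tau0_rate b"
proof -
  have factor_eq: "tau0_rate c = c * (c * exp c / (exp c - 1) - 1)" if "0 < c" for c :: real
    using that by (simp add: tau0_rate_def field_simps)
  have "(0 - 1) * exp 0 < (a - 1) * exp a"
    using assms by (intro strict_mono_onD[OF strict_mono_on_shifted_mult_exp]) auto
  then have "0 < a * exp a / (exp a - 1) - 1"
    using \<open>0 < a\<close> by (simp add: field_simps)
  moreover have "a * exp a / (exp a - 1) < b * exp b / (exp b - 1)"
    using assms by (intro strict_mono_onD[OF strict_mono_on_mult_exp_div]) auto
  ultimately show "0 < tau0_rate a" "tau0_rate a < tau0_rate b"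
    using assms by (auto simp: factor_eq intro!: mult_strict_mono)
qed

lemma snr_gamma_pos_strict_mono:
  fixes W N0 \<zeta> PA x y :: real
  assumes "W > 0" "N0 > 0" "\<zeta> > 0" "PA > 0" "0 < x" "x < y"
  shows "0 < snr_gamma W N0 \<zeta> PA x" and "snr_gamma W N0 \<zeta> PA x < snr_gamma W N0 \<zeta> PA y"
  using assms by (simp_all add: snr_gamma_def divide_strict_right_mono)

lemma tau0_opt_eq_tau0_rate:
  fixes W N0 \<zeta> PA x :: real
  assumes "0 < snr_gamma W N0 \<zeta> PA x"
  shows "tau0_opt D W N0 \<zeta> PA x = D * ln 2 / (W * tau0_rate (alpha_opt W N0 \<zeta> PA x))"
proof -
  note \<alpha> = lambertW0_shifted_equation[OF assms, folded alpha_opt_def]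
  have "2 powr (alpha_opt W N0 \<zeta> PA x / ln 2) = exp (alpha_opt W N0 \<zeta> PA x)"
    by (simp add: powr_def)
  moreover have "snr_gamma W N0 \<zeta> PA x = (alpha_opt W N0 \<zeta> PA x - 1) * exp (alpha_opt W N0 \<zeta> PA x) + 1"
    using \<alpha>(2) by simp
  ultimately show ?thesis
    unfolding tau0_opt_def tau0_rate_def by simp
qed

theorem lemma6:
  fixes D W N0 \<zeta> PA :: real
  assumes "D > 0" "W > 0" "N0 > 0" "\<zeta> > 0" "PA > 0"
  shows "\<forall>x y. 0 < x \<longrightarrow> x < y \<longrightarrow>
            tauS_opt D W N0 \<zeta> PA y < tauS_opt D W N0 \<zeta> PA x \<and>
            tau0_opt D W N0 \<zeta> PA y < tau0_opt D W N0 \<zeta> PA x"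
proof (intro allI impI)
  fix x y :: real
  assume "0 < x" "x < y"
  note \<gamma> = snr_gamma_pos_strict_mono[OF assms(2-5) \<open>0 < x\<close> \<open>x < y\<close>]
  have \<alpha>_pos: "0 < alpha_opt W N0 \<zeta> PA x"
    using lambertW0_shifted_equation(1)[OF \<gamma>(1)] by (simp add: alpha_opt_def)
  have \<alpha>_less: "alpha_opt W N0 \<zeta> PA x < alpha_opt W N0 \<zeta> PA y"
    using strict_mono_onD[OF strict_mono_on_lambertW0_shifted] \<gamma> by (simp add: alpha_opt_def)
  note rate = tau0_rate_pos_strict_mono[OF \<alpha>_pos \<alpha>_less]
  have "0 < D * ln 2"
    using \<open>D > 0\<close> by simp
  have "tauS_opt D W N0 \<zeta> PA y < tauS_opt D W N0 \<zeta> PA x"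
    unfolding tauS_opt_def using \<open>0 < D * ln 2\<close> \<open>W > 0\<close> \<alpha>_pos \<alpha>_less
    by (intro divide_strict_left_mono) auto
  moreover have "tau0_opt D W N0 \<zeta> PA y < tau0_opt D W N0 \<zeta> PA x"
    unfolding tau0_opt_eq_tau0_rate[OF \<gamma>(1)] tau0_opt_eq_tau0_rate[OF order.strict_trans[OF \<gamma>]]
    using \<open>0 < D * ln 2\<close> \<open>W > 0\<close> rate
    by (intro divide_strict_left_mono) auto
  ultimately show "tauS_opt D W N0 \<zeta> PA y < tauS_opt D W N0 \<zeta> PA x \<and>
             tau0_opt D W N0 \<zeta> PA y < tau0_opt D W N0 \<zeta> PA x"
    by blast
qed

end
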